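(* Let $q$ be a prime power, $k,b,t$ positive integers, and $f:\mathbb{F}_q^k\to \mathrm{Im}(f)$ an arbitrary function. Let $\boldsymbol{x}_1,\ldots,\boldsymbol{x}_{q^k}$ be an enumeration of all vectors of $\mathbb{F}_q^k$. Then \[ N_b\big(\boldsymbol{B}_f^{(1)}(t)\big)\le r_b^f(k,t)\le N_b\big(\boldsymbol{B}_f^{(2)}(t)\big). \]
   Context: For a vector $\boldsymbol{z}=(z_0,\ldots,z_{n-1})\in\mathbb{F}_q^n$, its $b$-symbol read vector is $\pi_b(\boldsymbol{z})=[(z_0,\ldots,z_{b-1}),(z_1,\ldots,z_b),\ldots,(z_{n-1},z_0,\ldots,z_{b-2})]$ (indices modulo $n$), and the $b$-symbol distance of $\boldsymbol{z},\boldsymbol{w}\in\mathbb{F}_q^n$ is $d_b(\boldsymbol{z},\boldsymbol{w})=d_H(\pi_b(\boldsymbol{z}),\pi_b(\boldsymbol{w}))$, i.e. the number of $i\in\{0,\ldots,n-1\}$ with $(z_i,\ldots,z_{i+b-1})\neq(w_i,\ldots,w_{i+b-1})$. A systematic encoding $\mathrm{Enc}:\mathbb{F}_q^k\to\mathbb{F}_q^{k+r}$, $\mathrm{Enc}(\boldsymbol{x})=(\boldsymbol{x},p(\boldsymbol{x}))$ with $p(\boldsymbol{x})\in\mathbb{F}_q^r$, is a function-correcting $b$-symbol code for $f$ (correcting $t$ errors) if $d_b(\mathrm{Enc}(\boldsymbol{x}_1),\mathrm{Enc}(\boldsymbol{x}_2))\ge 2t+1$ for all $\boldsymbol{x}_1,\boldsymbol{x}_2\in\mathbb{F}_q^k$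 with $f(\boldsymbol{x}_1)\ne f(\boldsymbol{x}_2)$. The optimal redundancy $r_b^f(k,t)$ is the smallest $r$ for which such a code exists. For $M\times M$ matrix $\boldsymbol{B}$ with nonnegative integer entries, a $\boldsymbol{B}$-irregular $b$-symbol distance code is a set $\{\boldsymbol{p}_1,\ldots,\boldsymbol{p}_M\}\subseteq \mathbb{F}_q^r$ admitting an ordering with $d_b(\boldsymbol{p}_i,\boldsymbol{p}_j)\ge[\boldsymbol{B}]_{ij}$ for all $i,j$; $N_b(\boldsymbol{B})$ is the smallest length $r$ for which such a code exists. With $[x]^+=\max\{x,0\}$, for vectors $\boldsymbol{x}_1,\ldots,\boldsymbol{x}_M\in\mathbb{F}_q^k$ define $M\times M$ matrices $[\boldsymbol{B}_f^{(1)}(t,\boldsymbol{x}_1,\ldots,\boldsymbol{x}_M)]_{ij}=[2t-b+2-d_b(\boldsymbol{x}_i,\boldsymbol{x}_j)]^+$ if $f(\boldsymbol{x}_i)\ne f(\boldsymbol{x}_j)$ and $0$ otherwise, and $[\boldsymbol{B}_f^{(2)}(t,\boldsymbol{x}_1,\ldots,\boldsymbol{x}_M)]_{ij}=[2t+b-d_b(\boldsymbol{x}_i,\boldsymbol{x}_j)]^+$ if $f(\boldsymbol{x}_i)\ne f(\boldsymbol{x}_j)$ and $0$ otherwise. $\boldsymbol{B}_f^{(1)}(t)$ and $\boldsymbol{B}_f^{(2)}(t)$ denote these matrices for $M=q^k$ and $\boldsymbol{x}_1,\ldots,\boldsymbol{x}_{q^k}$ the enumeration of $\mathbb{F}_q^k$.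 *)

theory Defs
  imports Main
begin

text \<open>Vectors of F_q^n are lists of length n over a finite field type 'a (q = CARD('a)).\<close>

definition vecs :: "'a itself \<Rightarrow> nat \<Rightarrow> 'a list set" where
  "vecs _ n = {x. length x = n}"

definition bsym_dist :: "nat \<Rightarrow> 'a list \<Rightarrow> 'a list \<Rightarrow> nat" where
  "bsym_dist b z w = card {i. i < length z \<and>
      (\<exists>j<b. z ! ((i + j) mod length z) \<noteq> w ! ((i + j) mod length z))}"

text \<open>Function-correcting b-symbol code with redundancy r (systematic encoding x |-> x @ p x).\<close>
definition is_fc_bsym_code :: "nat \<Rightarrow> nat \<Rightarrow> nat \<Rightarrow> ('a list \<Rightarrow> 'c) \<Rightarrow> nat \<Rightarrow> ('a list \<Rightarrow> 'a list) \<Rightarrow> bool" where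
  "is_fc_bsym_code b k t f r p \<longleftrightarrow>
     (\<forall>x. length x = k \<longrightarrow> length (p x) = r) \<and>
     (\<forall>x1 x2. length x1 = k \<longrightarrow> length x2 = k \<longrightarrow> f x1 \<noteq> f x2 \<longrightarrow>
        2 * t + 1 \<le> bsym_dist b (x1 @ p x1) (x2 @ p x2))"

definition opt_red :: "'a itself \<Rightarrow> nat \<Rightarrow> nat \<Rightarrow> nat \<Rightarrow> ('a list \<Rightarrow> 'c) \<Rightarrow> nat" where
  "opt_red _ b k t f = (LEAST r. \<exists>p :: 'a list \<Rightarrow> 'a list. is_fc_bsym_code b k t f r p)"

definition is_irreg_code :: "nat \<Rightarrow> nat \<Rightarrow> (nat \<Rightarrow> nat \<Rightarrow> nat) \<Rightarrow> nat \<Rightarrow> (nat \<Rightarrow> 'a list) \<Rightarrow> bool" where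
  "is_irreg_code b M B r P \<longleftrightarrow>
     (\<forall>i<M. length (P i) = r) \<and> (\<forall>i<M. \<forall>j<M. B i j \<le> bsym_dist b (P i) (P j))"

definition N_b :: "'a itself \<Rightarrow> nat \<Rightarrow> nat \<Rightarrow> (nat \<Rightarrow> nat \<Rightarrow> nat) \<Rightarrow> nat" where
  "N_b _ b M B = (LEAST r. \<exists>P :: nat \<Rightarrow> 'a list. is_irreg_code b M B r P)"

text \<open>The matrices B_f^(1)(t) and B_f^(2)(t) w.r.t. an enumeration xs of F_q^k
  (natural-number subtraction is [.]^+).\<close>
definition B1 :: "nat \<Rightarrow> nat \<Rightarrow> ('a list \<Rightarrow> 'c) \<Rightarrow> (nat \<Rightarrow> 'a list) \<Rightarrow> nat \<Rightarrow> nat \<Rightarrow> nat" where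
  "B1 b t f xs i j = (if f (xs i) \<noteq> f (xs j)
      then (2 * t + 2) - b - bsym_dist b (xs i) (xs j) else 0)"

definition B2 :: "nat \<Rightarrow> nat \<Rightarrow> ('a list \<Rightarrow> 'c) \<Rightarrow> (nat \<Rightarrow> 'a list) \<Rightarrow> nat \<Rightarrow> nat \<Rightarrow> nat" where
  "B2 b t f xs i j = (if f (xs i) \<noteq> f (xs j)
      then (2 * t + b) - bsym_dist b (xs i) (xs j) else 0)"

end

theory Submission
  imports Defs
begin

(* Write z = x @ p with x of length k and p of length r. A b-window of z that lies inside one
   block without wrapping around sees exactly the corresponding window of x or of p; only the
   windows crossing the seam x|p or the wrap-around seam p|x can change status, at most b - 1 at
   each seam. Moreover windows are lost (resp. gained) at one seam only: two such windows at
   opposite seams overhang into the following blocks, and the shorter overhang would need a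
   difference at a position that the longer one certifies as equal. Hence d_b(x, x') + d_b(p, p')
   and d_b(x @ p, x' @ p') differ by at most b - 1. For the lower bound, the redundancy parts of
   an optimal function-correcting code form a B_f^(1)-irregular code; for the upper bound, an
   optimal B_f^(2)-irregular code (one exists: the (2t+b)-fold repetitions of the messages) serves
   as redundancy. *)

definition cyclic_diff :: "'a list \<Rightarrow> 'a list \<Rightarrow> nat \<Rightarrow> bool" where
  "cyclic_diff z w j \<longleftrightarrow> z ! (j mod length z) \<noteq> w ! (j mod length z)"

definition window_hits :: "nat \<Rightarrow> (nat \<Rightarrow> bool) \<Rightarrow> nat \<Rightarrow> bool" where
  "window_hits b D i \<longleftrightarrow> (\<exists>j<b. D (i + j))"

definition bad_windows :: "nat \<Rightarrow> nat \<Rightarrow> (nat \<Rightarrow> bool) \<Rightarrow> nat set" where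
  "bad_windows b n D = {i. i < n \<and> window_hits b D i}"

lemma bsym_dist_eq_card_bad_windows:
  "bsym_dist b z w = card (bad_windows b (length z) (cyclic_diff z w))"
  unfolding bsym_dist_def bad_windows_def window_hits_def cyclic_diff_def ..

lemma card_good_windows_add_card_bad_windows:
  "card {i. i < n \<and> \<not> window_hits b D i} + card (bad_windows b n D) = n"
proof -
  have "{i. i < n \<and> \<not> window_hits b D i} \<union> bad_windows b n D = {..<n}"
    unfolding bad_windows_def by auto
  moreover have "{i. i < n \<and> \<not> window_hits b D i} \<inter> bad_windows b n D = {}"
    unfolding bad_windows_def by auto
  ultimately show ?thesis
    by (metis card_Un_disjoint card_lessThan finite_Un finite_lessThan)
qed

lemma window_hits_cong:
  "(\<And>j. j < b \<Longrightarrow> D (i + j) = D' (i' + j)) \<Longrightarrow> window_hits b D i = window_hits b D' i'"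
  unfolding window_hits_def by auto

lemma not_window_hitsD: "\<not> window_hits b D i \<Longrightarrow> i \<le> j \<Longrightarrow> j < i + b \<Longrightarrow> \<not> D j"
  unfolding window_hits_def by (metis add_diff_inverse_nat add_less_cancel_left not_le)

lemma window_hits_beyond:
  assumes "window_hits b D i" and "i \<le> c" and "\<And>j. i \<le> j \<Longrightarrow> j < c \<Longrightarrow> j < i + b \<Longrightarrow> \<not> D j"
  shows "\<exists>u < i + b - c. D (c + u)"
proof -
  obtain j where "j < b" "D (i + j)"
    using assms(1) unfolding window_hits_def by blast
  moreover from this have "c \<le> i + j"
    using assms(3) by (meson add_less_cancel_left le_add1 not_le)
  ultimately show ?thesis
    by (metis add_diff_inverse_nat add_less_cancel_left diff_less_mono not_le)
qed

(* Elements of Tx or k + Tp missing from Tz lie among the last b - 1 positions of their block,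
   and by the last hypothesis only one block has such elements. *)
lemma card_glue_le:
  fixes Tx Tp Tz :: "nat set"
  assumes "Tx \<subseteq> {..<k}" and "Tp \<subseteq> {..<r}" and "Tz \<subseteq> {..<k + r}"
    and low: "\<And>i. i \<in> Tx \<Longrightarrow> i + b \<le> k \<Longrightarrow> i \<in> Tz"
    and high: "\<And>i. i \<in> Tp \<Longrightarrow> i + b \<le> r \<Longrightarrow> k + i \<in> Tz"
    and one_sided: "Tx \<subseteq> Tz \<or> (+) k ` Tp \<subseteq> Tz"
  shows "card Tx + card Tp \<le> card Tz + (b - 1)"
proof -
  define T where "T = Tx \<union> (+) k ` Tp"
  have fin: "finite Tx" "finite Tp" "finite Tz"
    using assms(1-3) finite_subset by blast+
  have "card Tx + card Tp = card T"
    unfolding T_def using assms(1) fin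
    by (subst card_Un_disjoint) (auto simp: card_image)
  also have "\<dots> \<le> card (Tz \<union> (T - Tz))"
    using fin unfolding T_def by (intro card_mono) auto
  also have "\<dots> \<le> card Tz + card (T - Tz)"
    by (rule card_Un_le)
  also have "card (T - Tz) \<le> b - 1"
  proof -
    have "T - Tz \<subseteq> {k + r + 1 - b..<k + r} \<or> T - Tz \<subseteq> {k + 1 - b..<k}"
      using one_sided
    proof
      assume "Tx \<subseteq> Tz"
      then show ?thesis using assms(2) high unfolding T_def by fastforce
    next
      assume "(+) k ` Tp \<subseteq> Tz"
      then show ?thesis using assms(1) low unfolding T_def by fastforce
    qed
    moreover have "card {k + r + 1 - b..<k + r} \<le> b - 1" "card {k + 1 - b..<k} \<le> b - 1"
      by simp_all
    ultimately show ?thesis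
      by (meson card_mono finite_atLeastLessThan le_trans)
  qed
  finally show ?thesis by simp
qed

(* Dx, Dp and Dz stand for the cyclic difference patterns of x, p (lengths k, r) and x @ p. *)
locale cyclic_concat =
  fixes k r :: nat and Dx Dp Dz :: "nat \<Rightarrow> bool"
  assumes Dz_low: "j < k \<Longrightarrow> Dz j = Dx j"
    and Dz_high: "j < r \<Longrightarrow> Dz (k + j) = Dp j"
    and Dx_mod: "Dx (j mod k) = Dx j"
    and Dp_mod: "Dp (j mod r) = Dp j"
    and Dz_mod: "Dz (j mod (k + r)) = Dz j"
begin

lemma Dx_shift: "Dx (k + j) = Dx j"
  by (metis Dx_mod mod_add_self1)

lemma Dp_shift: "Dp (r + j) = Dp j"
  by (metis Dp_mod mod_add_self1)

lemma Dz_shift: "Dz (k + r + j) = Dz j"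
  by (metis Dz_mod mod_add_self1)

lemma window_hits_low_interior: "i + b \<le> k \<Longrightarrow> window_hits b Dz i = window_hits b Dx i"
  by (rule window_hits_cong) (simp add: Dz_low)

lemma window_hits_high_interior: "i + b \<le> r \<Longrightarrow> window_hits b Dz (k + i) = window_hits b Dp i"
  by (rule window_hits_cong) (simp add: Dz_high add.assoc)

lemma Dz_eq: "j < k + r \<Longrightarrow> Dz j = (if j < k then Dx j else Dp (j - k))"
  using Dz_low Dz_high[of "j - k"] by (cases "j < k") auto

lemma lost_window_low:
  assumes "i < k" and "window_hits b Dx i" and "\<not> window_hits b Dz i"
  shows "(\<exists>u < i + b - k. Dx u) \<and> (\<forall>u < i + b - k. \<not> Dz (k + u))"
proof
  have "\<not> Dx j" if "i \<le> j" "j < k" "j < i + b" for j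
    using not_window_hitsD[OF assms(3) that(1,3)] Dz_low[OF that(2)] by simp
  then have "\<exists>u < i + b - k. Dx (k + u)"
    using window_hits_beyond[OF assms(2)] assms(1) by simp
  then show "\<exists>u < i + b - k. Dx u"
    by (simp add: Dx_shift)
  show "\<forall>u < i + b - k. \<not> Dz (k + u)"
    using not_window_hitsD[OF assms(3)] assms(1) by simp
qed

lemma lost_window_high:
  assumes "i < r" and "window_hits b Dp i" and "\<not> window_hits b Dz (k + i)"
  shows "(\<exists>u < i + b - r. Dp u) \<and> (\<forall>u < i + b - r. \<not> Dz u)"
proof
  have "\<not> Dp j" if "i \<le> j" "j < r" "j < i + b" for j
    using not_window_hitsD[OF assms(3), of "k + j"] Dz_high[OF that(2)] that by simp
  then have "\<exists>u < i + b - r. Dp (r + u)"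
    using window_hits_beyond[OF assms(2)] assms(1) by simp
  then show "\<exists>u < i + b - r. Dp u"
    by (simp add: Dp_shift)
  show "\<forall>u < i + b - r. \<not> Dz u"
    using not_window_hitsD[OF assms(3), of "k + r + _"] assms(1) by (simp add: Dz_shift)
qed

lemma gained_window_low:
  assumes "i < k" and "\<not> window_hits b Dx i" and "window_hits b Dz i"
  shows "(\<exists>u < i + b - k. Dz (k + u)) \<and> (\<forall>u < i + b - k. \<not> Dx u)"
proof
  have "\<not> Dz j" if "i \<le> j" "j < k" "j < i + b" for j
    using not_window_hitsD[OF assms(2) that(1,3)] Dz_low[OF that(2)] by simp
  then show "\<exists>u < i + b - k. Dz (k + u)"
    using window_hits_beyond[OF assms(3)] assms(1) by simp
  show "\<forall>u < i + b - k. \<not> Dx u"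
    using not_window_hitsD[OF assms(2), of "k + _"] assms(1) by (simp add: Dx_shift)
qed

lemma gained_window_high:
  assumes "i < r" and "\<not> window_hits b Dp i" and "window_hits b Dz (k + i)"
  shows "(\<exists>u < i + b - r. Dz u) \<and> (\<forall>u < i + b - r. \<not> Dp u)"
proof
  have "\<not> Dz j" if "k + i \<le> j" "j < k + r" "j < k + i + b" for j
    using not_window_hitsD[OF assms(2), of "j - k"] Dz_high[of "j - k"] that by simp
  then have "\<exists>u < i + b - r. Dz (k + r + u)"
    using window_hits_beyond[OF assms(3), of "k + r"] assms(1) by simp
  then show "\<exists>u < i + b - r. Dz u"
    by (simp add: Dz_shift)
  show "\<forall>u < i + b - r. \<not> Dp u"
    using not_window_hitsD[OF assms(2), of "r + _"] assms(1) by (simp add: Dp_shift)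
qed

lemma lost_windows_one_sided:
  "(\<forall>i<k. window_hits b Dx i \<longrightarrow> window_hits b Dz i)
   \<or> (\<forall>i<r. window_hits b Dp i \<longrightarrow> window_hits b Dz (k + i))"
proof (rule ccontr)
  assume "\<not> ?thesis"
  then obtain i i' where i: "i < k" "window_hits b Dx i" "\<not> window_hits b Dz i"
    and i': "i' < r" "window_hits b Dp i'" "\<not> window_hits b Dz (k + i')"
    by blast
  obtain u u' where u: "u < i + b - k" "Dx u" and u': "u' < i' + b - r" "Dp u'"
    and quiet_high: "\<forall>v < i + b - k. \<not> Dz (k + v)" and quiet_low: "\<forall>v < i' + b - r. \<not> Dz v"
    using lost_window_low[OF i] lost_window_high[OF i'] by blast
  show False
  proof (cases "i + b - k \<le> i' + b - r")
    case True
    have "u mod k < i' + b - r"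
      using u(1) True mod_less_eq_dividend[of u k] by linarith
    then show False
      using quiet_low Dz_low[of "u mod k"] Dx_mod u(2) i(1) by simp
  next
    case False
    have "u' mod r < i + b - k"
      using u'(1) False mod_less_eq_dividend[of u' r] by linarith
    then show False
      using quiet_high Dz_high[of "u' mod r"] Dp_mod u'(2) i'(1) by simp
  qed
qed

lemma gained_windows_one_sided:
  "(\<forall>i<k. window_hits b Dz i \<longrightarrow> window_hits b Dx i)
   \<or> (\<forall>i<r. window_hits b Dz (k + i) \<longrightarrow> window_hits b Dp i)"
proof (rule ccontr)
  assume "\<not> ?thesis"
  then obtain i i' where i: "i < k" "\<not> window_hits b Dx i" "window_hits b Dz i"
    and i': "i' < r" "\<not> window_hits b Dp i'" "window_hits b Dz (k + i')"
    by blast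
  define A A' where "A = i + b - k" and "A' = i' + b - r"
  obtain u u' where u: "u < A" "Dz (k + u)" and u': "u' < A'" "Dz u'"
    and quiet_x: "\<forall>v < A. \<not> Dx v" and quiet_p: "\<forall>v < A'. \<not> Dp v"
    using gained_window_low[OF i] gained_window_high[OF i'] unfolding A_def A'_def by blast
  have quiet: "\<not> Dz j" if "j < k + r" "j < k \<Longrightarrow> j < A" "k \<le> j \<Longrightarrow> j - k < A'" for j
    using Dz_eq[OF that(1)] quiet_x quiet_p that(2,3) by (auto split: if_splits)
  show False
  proof (cases "A \<le> A'")
    case True
    define j where "j = (k + u) mod (k + r)"
    have "j < k + r"
      unfolding j_def using i'(1) by simp
    moreover have "j < A" if "j < k"
    proof -
      have "k + r \<le> k + u"
        using that unfolding j_def by (metis le_add1 mod_less not_le order.strict_trans2)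
      then have "j \<le> u - r"
        unfolding j_def by (metis le_mod_geq mod_less_eq_dividend add_diff_cancel_left)
      then show ?thesis
        using u(1) by linarith
    qed
    moreover have "j - k < A'"
      using u(1) True mod_less_eq_dividend[of "k + u" "k + r"] unfolding j_def by linarith
    ultimately show False
      using quiet u(2) Dz_mod unfolding j_def by blast
  next
    case False
    define j where "j = u' mod (k + r)"
    have "j \<le> u'" "j < k + r"
      unfolding j_def using i'(1) by simp_all
    moreover from this have "j < A" "j - k < A'"
      using u'(1) False by linarith+
    ultimately show False
      using quiet u'(2) Dz_mod unfolding j_def by blast
  qed
qed

lemma card_bad_windows_append_ge:
  "card (bad_windows b k Dx) + card (bad_windows b r Dp)
     \<le> card (bad_windows b (k + r) Dz) + (b - 1)"
  using lost_windows_one_sided window_hits_low_interior window_hits_high_interior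
  by (intro card_glue_le) (auto simp: bad_windows_def)

lemma card_bad_windows_append_le:
  "card (bad_windows b (k + r) Dz)
     \<le> card (bad_windows b k Dx) + card (bad_windows b r Dp) + (b - 1)"
proof -
  let ?good = "\<lambda>n D. {i. i < n \<and> \<not> window_hits b D i}"
  have "card (?good k Dx) + card (?good r Dp) \<le> card (?good (k + r) Dz) + (b - 1)"
    using gained_windows_one_sided window_hits_low_interior window_hits_high_interior
    by (intro card_glue_le) auto
  then show ?thesis
    using card_good_windows_add_card_bad_windows[of k b Dx]
      card_good_windows_add_card_bad_windows[of r b Dp]
      card_good_windows_add_card_bad_windows[of "k + r" b Dz]
    by linarith
qed

end

lemma cyclic_concat_cyclic_diff:
  assumes "length x' = length x" and "length p' = length p"
  shows "cyclic_concat (length x) (length p)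
           (cyclic_diff x x') (cyclic_diff p p') (cyclic_diff (x @ p) (x' @ p'))"
  by unfold_locales (use assms in \<open>auto simp: cyclic_diff_def nth_append\<close>)

lemma bsym_dist_append_le:
  assumes "length x' = length x" and "length p' = length p"
  shows "bsym_dist b (x @ p) (x' @ p') \<le> bsym_dist b x x' + bsym_dist b p p' + (b - 1)"
  using cyclic_concat.card_bad_windows_append_le[OF cyclic_concat_cyclic_diff[OF assms]]
  by (simp add: bsym_dist_eq_card_bad_windows)

lemma bsym_dist_append_ge:
  assumes "length x' = length x" and "length p' = length p"
  shows "bsym_dist b x x' + bsym_dist b p p' \<le> bsym_dist b (x @ p) (x' @ p') + (b - 1)"
  using cyclic_concat.card_bad_windows_append_ge[OF cyclic_concat_cyclic_diff[OF assms]]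
  by (simp add: bsym_dist_eq_card_bad_windows)

definition hamming_dist :: "'a list \<Rightarrow> 'a list \<Rightarrow> nat" where
  "hamming_dist z w = card {i. i < length z \<and> z ! i \<noteq> w ! i}"

lemma hamming_dist_le_bsym_dist: "0 < b \<Longrightarrow> hamming_dist z w \<le> bsym_dist b z w"
  unfolding hamming_dist_def bsym_dist_def by (intro card_mono) (auto intro: exI[of _ 0])

lemma hamming_dist_pos: "length w = length z \<Longrightarrow> z \<noteq> w \<Longrightarrow> 0 < hamming_dist z w"
  unfolding hamming_dist_def by (subst card_gt_0_iff) (auto intro: nth_equalityI)

lemma hamming_dist_append:
  assumes "length x' = length x"
  shows "hamming_dist (x @ p) (x' @ p') = hamming_dist x x' + hamming_dist p p'"
proof -
  let ?A = "{i. i < length x \<and> x ! i \<noteq> x' ! i}"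
  let ?B = "(+) (length x) ` {i. i < length p \<and> p ! i \<noteq> p' ! i}"
  have "{i. i < length (x @ p) \<and> (x @ p) ! i \<noteq> (x' @ p') ! i} = ?A \<union> ?B"
  proof (intro set_eqI iffI)
    fix i assume "i \<in> {i. i < length (x @ p) \<and> (x @ p) ! i \<noteq> (x' @ p') ! i}"
    then show "i \<in> ?A \<union> ?B"
      using assms by (cases "i < length x")
        (auto simp: nth_append image_iff intro: exI[of _ "i - length x"])
  qed (use assms in \<open>auto simp: nth_append\<close>)
  moreover have "?A \<inter> ?B = {}"
    by auto
  ultimately show ?thesis
    unfolding hamming_dist_def by (simp add: card_Un_disjoint card_image)
qed

lemma hamming_dist_concat_replicate:
  "length v = length u \<Longrightarrow>
     hamming_dist (concat (replicate m u)) (concat (replicate m v)) = m * hamming_dist u v"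
  by (induction m) (simp_all add: hamming_dist_append, simp add: hamming_dist_def)

lemma N_b_le: "is_irreg_code b M B r (P :: nat \<Rightarrow> 'a list) \<Longrightarrow> N_b TYPE('a) b M B \<le> r"
  unfolding N_b_def by (rule Least_le) blast

lemma is_irreg_code_N_b:
  "is_irreg_code b M B r (P :: nat \<Rightarrow> 'a list) \<Longrightarrow>
     \<exists>Q :: nat \<Rightarrow> 'a list. is_irreg_code b M B (N_b TYPE('a) b M B) Q"
  unfolding N_b_def
  using LeastI_ex[of "\<lambda>r. \<exists>Q :: nat \<Rightarrow> 'a list. is_irreg_code b M B r Q"] by blast

lemma opt_red_le:
  "is_fc_bsym_code b k t f r (p :: 'a list \<Rightarrow> 'a list) \<Longrightarrow> opt_red TYPE('a) b k t f \<le> r"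
  unfolding opt_red_def by (rule Least_le) blast

lemma is_fc_bsym_code_opt_red:
  "is_fc_bsym_code b k t f r (p :: 'a list \<Rightarrow> 'a list) \<Longrightarrow>
     \<exists>q :: 'a list \<Rightarrow> 'a list. is_fc_bsym_code b k t f (opt_red TYPE('a) b k t f) q"
  unfolding opt_red_def
  using LeastI_ex[of "\<lambda>r. \<exists>q :: 'a list \<Rightarrow> 'a list. is_fc_bsym_code b k t f r q"] by blast

lemma is_irreg_code_repetition:
  assumes "0 < b" and len: "\<forall>i<M. length (xs i) = k"
  shows "is_irreg_code b M (B2 b t f xs) ((2 * t + b) * k)
           (\<lambda>i. concat (replicate (2 * t + b) (xs i)))"
  (is "is_irreg_code _ _ _ _ ?rep")
  unfolding is_irreg_code_def
proof (intro conjI allI impI)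
  fix i assume "i < M"
  then show "length (?rep i) = (2 * t + b) * k"
    using len by (simp add: length_concat sum_list_replicate)
next
  fix i j assume ij: "i < M" "j < M"
  show "B2 b t f xs i j \<le> bsym_dist b (?rep i) (?rep j)"
  proof (cases "f (xs i) = f (xs j)")
    case True
    then show ?thesis by (simp add: B2_def)
  next
    case False
    then have "0 < hamming_dist (xs i) (xs j)"
      using hamming_dist_pos len ij by metis
    then have "2 * t + b \<le> (2 * t + b) * hamming_dist (xs i) (xs j)"
      by simp
    also have "\<dots> = hamming_dist (?rep i) (?rep j)"
      using hamming_dist_concat_replicate[of "xs j" "xs i"] len ij by simp
    also have "\<dots> \<le> bsym_dist b (?rep i) (?rep j)"
      by (rule hamming_dist_le_bsym_dist[OF assms(1)])
    finally show ?thesis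
      by (simp add: B2_def le_diff_conv)
  qed
qed

lemma is_irreg_code_B1_of_fc_code:
  assumes "0 < b" and p: "is_fc_bsym_code b k t f r p" and len: "\<forall>i<M. length (xs i) = k"
  shows "is_irreg_code b M (B1 b t f xs) r (p \<circ> xs)"
  unfolding is_irreg_code_def
proof (intro conjI allI impI)
  fix i assume "i < M"
  then show "length ((p \<circ> xs) i) = r"
    using p len unfolding is_fc_bsym_code_def by simp
next
  fix i j assume ij: "i < M" "j < M"
  show "B1 b t f xs i j \<le> bsym_dist b ((p \<circ> xs) i) ((p \<circ> xs) j)"
  proof (cases "f (xs i) = f (xs j)")
    case True
    then show ?thesis by (simp add: B1_def)
  next
    case False
    then have "2 * t + 1 \<le> bsym_dist b (xs i @ p (xs i)) (xs j @ p (xs j))"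
      using p len ij unfolding is_fc_bsym_code_def by blast
    also have "\<dots> \<le> bsym_dist b (xs i) (xs j) + bsym_dist b (p (xs i)) (p (xs j)) + (b - 1)"
      using p len ij by (intro bsym_dist_append_le) (simp_all add: is_fc_bsym_code_def)
    finally show ?thesis
      using False assms(1) by (simp add: B1_def)
  qed
qed

lemma is_fc_bsym_code_of_irreg_code_B2:
  assumes "0 < b" and P: "is_irreg_code b M (B2 b t f xs) r P"
    and bij: "bij_betw xs {..<M} {x. length x = k}"
  shows "is_fc_bsym_code b k t f r (P \<circ> inv_into {..<M} xs)"
proof -
  define ix where "ix = inv_into {..<M} xs"
  have ix: "ix x < M" "xs (ix x) = x" if "length x = k" for x
    using bij_betw_apply[OF bij_betw_inv_into[OF bij]] f_inv_into_f[of x xs "{..<M}"]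
      bij_betw_imp_surj_on[OF bij] that unfolding ix_def by auto
  have lenP: "length (P (ix x)) = r" if "length x = k" for x
    using P ix that unfolding is_irreg_code_def by blast
  have "2 * t + 1 \<le> bsym_dist b (x1 @ P (ix x1)) (x2 @ P (ix x2))"
    if x: "length x1 = k" "length x2 = k" "f x1 \<noteq> f x2" for x1 x2
  proof -
    have "B2 b t f xs (ix x1) (ix x2) \<le> bsym_dist b (P (ix x1)) (P (ix x2))"
      using P ix x unfolding is_irreg_code_def by blast
    then have "2 * t + b - bsym_dist b x1 x2 \<le> bsym_dist b (P (ix x1)) (P (ix x2))"
      using ix x by (simp add: B2_def)
    moreover have "bsym_dist b x1 x2 + bsym_dist b (P (ix x1)) (P (ix x2))
        \<le> bsym_dist b (x1 @ P (ix x1)) (x2 @ P (ix x2)) + (b - 1)"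
      using lenP x by (intro bsym_dist_append_ge) auto
    ultimately show ?thesis
      using assms(1) by linarith
  qed
  with lenP show ?thesis
    unfolding is_fc_bsym_code_def ix_def by simp
qed

theorem theorem3p2:
  fixes f :: "'a::{field,finite} list \<Rightarrow> 'c"
    and xs :: "nat \<Rightarrow> 'a list"
    and k b t :: nat
  assumes "0 < k" and "0 < b" and "0 < t"
    and "bij_betw xs {..<card (UNIV :: 'a set) ^ k} (vecs TYPE('a) k)"
  shows "N_b TYPE('a) b (card (UNIV :: 'a set) ^ k) (B1 b t f xs) \<le> opt_red TYPE('a) b k t f
       \<and> opt_red TYPE('a) b k t f \<le> N_b TYPE('a) b (card (UNIV :: 'a set) ^ k) (B2 b t f xs)"
proof -
  let ?M = "card (UNIV :: 'a set) ^ k"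
  have bij: "bij_betw xs {..<?M} {x. length x = k}"
    using assms(4) by (simp add: vecs_def)
  then have len: "\<forall>i<?M. length (xs i) = k"
    using bij_betw_apply by fastforce
  obtain P :: "nat \<Rightarrow> 'a list"
    where P: "is_irreg_code b ?M (B2 b t f xs) (N_b TYPE('a) b ?M (B2 b t f xs)) P"
    using is_irreg_code_N_b[OF is_irreg_code_repetition[OF assms(2) len]] by blast
  have fc: "is_fc_bsym_code b k t f (N_b TYPE('a) b ?M (B2 b t f xs)) (P \<circ> inv_into {..<?M} xs)"
    by (rule is_fc_bsym_code_of_irreg_code_B2[OF assms(2) P bij])
  obtain p :: "'a list \<Rightarrow> 'a list" where p: "is_fc_bsym_code b k t f (opt_red TYPE('a) b k t f) p"
    using is_fc_bsym_code_opt_red[OF fc] by blast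
  show ?thesis
    using N_b_le[OF is_irreg_code_B1_of_fc_code[OF assms(2) p len]] opt_red_le[OF fc] by blast
qed

end
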